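(* Let $d$ be a $\delta$-hyperbolic metric on a set containing distinct points $w,x,y,z$, let $(T,d_T)$ be the universal tree on $x,y,z$ with Steiner node $r$, and let $\pi$ be a permutation of $\{x,y,z\}$ such that $(\pi y,\pi z)_w=\max\big((x,y)_w,(y,z)_w,(x,z)_w\big)$ (so that $w$ is sorted into a zone of $\pi x$ and assigned the distance $d_T(w,r):=(\pi y,\pi z)_w$ to $r$). Then the resulting tree distances from $w$ to $\pi y$ and $\pi z$ through $r$ have additive distortion at most $\delta$: \[\big|(\pi y,\pi z)_w+d_T(r,\pi y)-d(w,\pi y)\big|\le\delta\quad\text{and}\quad\big|(\pi y,\pi z)_w+d_T(r,\pi z)-d(w,\pi z)\big|\le\delta.\]
   Context: The Gromov product is $(a,b)_c=\tfrac12\big(d(c,a)+d(c,b)-d(a,b)\big)$. A metric $d$ is $\delta$-hyperbolic if $(a,b)_c\ge\min\big((a,e)_c,(b,e)_c\big)-\delta$ for all points $a,b,c,e$. The universal tree on $x,y,z$ has nodes $x,y,z,r$ with $r$ adjacent to $x,y,z$ by edges of weights $d_T(x,r)=(y,z)_x$, $d_T(y,r)=(x,z)_y$, $d_T(z,r)=(x,y)_z$. *)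

theory Defs
  imports Main "HOL.Real"
begin

definition metric_on :: "'a set \<Rightarrow> ('a \<Rightarrow> 'a \<Rightarrow> real) \<Rightarrow> bool" where
  "metric_on S d \<longleftrightarrow>
     (\<forall>a\<in>S. \<forall>b\<in>S. d a b = 0 \<longleftrightarrow> a = b) \<and>
     (\<forall>a\<in>S. \<forall>b\<in>S. d a b = d b a) \<and>
     (\<forall>a\<in>S. \<forall>b\<in>S. \<forall>c\<in>S. d a c \<le> d a b + d b c)"

definition gromov :: "('a \<Rightarrow> 'a \<Rightarrow> real) \<Rightarrow> 'a \<Rightarrow> 'a \<Rightarrow> 'a \<Rightarrow> real" where
  "gromov d a b c = (d c a + d c b - d a b) / 2"

definition hyperbolic_on :: "'a set \<Rightarrow> ('a \<Rightarrow> 'a \<Rightarrow> real) \<Rightarrow> real \<Rightarrow> bool" where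
  "hyperbolic_on S d \<delta> \<longleftrightarrow>
     (\<forall>a\<in>S. \<forall>b\<in>S. \<forall>c\<in>S. \<forall>e\<in>S.
        gromov d a b c \<ge> min (gromov d a e c) (gromov d b e c) - \<delta>)"

text \<open>Universal tree on x, y, z: edge weight d_T(v, r) between the leaf v \<in> {x,y,z}
  and the Steiner node r: d_T(x,r) = (y,z)_x, d_T(y,r) = (x,z)_y, d_T(z,r) = (x,y)_z.\<close>
definition utree_leaf_dist :: "('a \<Rightarrow> 'a \<Rightarrow> real) \<Rightarrow> 'a \<Rightarrow> 'a \<Rightarrow> 'a \<Rightarrow> 'a \<Rightarrow> real" where
  "utree_leaf_dist d x y z v =
     (if v = x then gromov d y z x
      else if v = y then gromov d x z y
      else gromov d x y z)"

end

theory Submission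
  imports Defs
begin

text \<open>Write a, b, c for \<pi> x, \<pi> y, \<pi> z. The tree distance (b,c)_w + (a,c)_b from w to b
  differs from d(w,b) by exactly (a,c)_w - (a,b)_w. Since (b,c)_w is the largest of the three
  Gromov products at w, the minimum in the hyperbolicity inequality for (a,b)_w, and likewise
  for (a,c)_w, is attained by the other non-maximal product; the two inequalities bound this
  difference by \<delta> from both sides. Swapping b and c gives the claim at c.\<close>

lemma metric_on_commute:
  assumes "metric_on S d" "a \<in> S" "b \<in> S"
  shows "d a b = d b a"
  using assms unfolding metric_on_def by blast

lemma gromov_commute:
  assumes "d a b = d b a"
  shows "gromov d a b c = gromov d b a c"
  using assms unfolding gromov_def by simp

lemma gromov_tripod_distortion_eq:
  assumes "d b a = d a b"
  shows "gromov d b c w + gromov d a c b - d w b = gromov d a c w - gromov d a b w"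
  using assms unfolding gromov_def by (simp add: field_simps)

lemma hyperbolic_tripod_distortion_le:
  assumes "metric_on S d" "hyperbolic_on S d \<delta>"
    and "a \<in> S" "b \<in> S" "c \<in> S" "w \<in> S"
    and "gromov d a b w \<le> gromov d b c w" "gromov d a c w \<le> gromov d b c w"
  shows "\<bar>gromov d b c w + gromov d a c b - d w b\<bar> \<le> \<delta>"
proof -
  have "gromov d a b w \<ge> min (gromov d a c w) (gromov d b c w) - \<delta>"
    using assms(2-6) unfolding hyperbolic_on_def by blast
  then have lower: "gromov d a b w \<ge> gromov d a c w - \<delta>"
    using assms(8) by simp
  have "gromov d a c w \<ge> min (gromov d a b w) (gromov d c b w) - \<delta>"
    using assms(2-6) unfolding hyperbolic_on_def by blast
  moreover have "gromov d c b w = gromov d b c w"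
    using gromov_commute metric_on_commute assms(1,4,5) by metis
  ultimately have upper: "gromov d a c w \<ge> gromov d a b w - \<delta>"
    using assms(7) by simp
  have "gromov d b c w + gromov d a c b - d w b = gromov d a c w - gromov d a b w"
    using gromov_tripod_distortion_eq metric_on_commute assms(1,3,4) by metis
  with lower upper show ?thesis by linarith
qed

lemma utree_leaf_dist_eq_gromov:
  assumes "\<forall>p\<in>{x, y, z}. \<forall>q\<in>{x, y, z}. d p q = d q p"
    and "distinct [x, y, z]" "distinct [a, b, c]" "{a, b, c} = {x, y, z}"
  shows "utree_leaf_dist d x y z b = gromov d a c b"
proof -
  have "a \<in> {x, y, z}" "b \<in> {x, y, z}" "c \<in> {x, y, z}"
    using assms(4) by blast+
  then consider "a = x" "b = y" "c = z" | "a = x" "b = z" "c = y" | "a = y" "b = x" "c = z"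
    | "a = y" "b = z" "c = x" | "a = z" "b = x" "c = y" | "a = z" "b = y" "c = x"
    using assms(3) by auto
  then show ?thesis
    using assms(1,2) unfolding utree_leaf_dist_def by cases (auto intro: gromov_commute)
qed

lemma gromov_le_Max_pairs:
  assumes "\<forall>p\<in>{x, y, z}. \<forall>q\<in>{x, y, z}. d p q = d q p"
    and "p \<in> {x, y, z}" "q \<in> {x, y, z}" "p \<noteq> q"
  shows "gromov d p q w \<le> Max {gromov d x y w, gromov d y z w, gromov d x z w}"
proof (rule Max_ge)
  show "gromov d p q w \<in> {gromov d x y w, gromov d y z w, gromov d x z w}"
    using assms by (auto intro: gromov_commute)
qed simp

theorem proposition1:
  fixes S :: "'a set" and d :: "'a \<Rightarrow> 'a \<Rightarrow> real" and \<delta> :: real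
    and w x y z :: 'a and \<pi> :: "'a \<Rightarrow> 'a"
  assumes "metric_on S d"
    and "hyperbolic_on S d \<delta>"
    and "w \<in> S" "x \<in> S" "y \<in> S" "z \<in> S"
    and "distinct [w, x, y, z]"
    and "bij_betw \<pi> {x, y, z} {x, y, z}"
    and "gromov d (\<pi> y) (\<pi> z) w = Max {gromov d x y w, gromov d y z w, gromov d x z w}"
  shows "\<bar>gromov d (\<pi> y) (\<pi> z) w + utree_leaf_dist d x y z (\<pi> y) - d w (\<pi> y)\<bar> \<le> \<delta>
       \<and> \<bar>gromov d (\<pi> y) (\<pi> z) w + utree_leaf_dist d x y z (\<pi> z) - d w (\<pi> z)\<bar> \<le> \<delta>"
proof -
  have xyz: "distinct [x, y, z]" using assms(7) by simp
  have sym: "\<forall>p\<in>{x, y, z}. \<forall>q\<in>{x, y, z}. d p q = d q p"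
    using assms(1,4-6) unfolding metric_on_def by blast
  have image: "{\<pi> x, \<pi> y, \<pi> z} = {x, y, z}"
    using bij_betw_imp_surj_on[OF assms(8)] by simp
  have perm: "distinct [\<pi> x, \<pi> y, \<pi> z]"
    using bij_betw_imp_inj_on[OF assms(8)] xyz by (simp add: inj_on_eq_iff)
  have "{\<pi> x, \<pi> y, \<pi> z} \<subseteq> S"
    using image assms(4-6) by simp
  then have in_S: "\<pi> x \<in> S" "\<pi> y \<in> S" "\<pi> z \<in> S"
    by simp_all
  have in_xyz: "\<pi> x \<in> {x, y, z}" "\<pi> y \<in> {x, y, z}" "\<pi> z \<in> {x, y, z}"
    unfolding image[symmetric] by simp_all
  have commute: "gromov d (\<pi> z) (\<pi> y) w = gromov d (\<pi> y) (\<pi> z) w"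
    using gromov_commute metric_on_commute assms(1) in_S(2,3) by metis
  have "gromov d (\<pi> x) (\<pi> y) w \<le> gromov d (\<pi> y) (\<pi> z) w"
    "gromov d (\<pi> x) (\<pi> z) w \<le> gromov d (\<pi> z) (\<pi> y) w"
    unfolding commute assms(9)
    using gromov_le_Max_pairs[OF sym in_xyz(1,2)] gromov_le_Max_pairs[OF sym in_xyz(1,3)] perm
    by simp_all
  moreover have "utree_leaf_dist d x y z (\<pi> y) = gromov d (\<pi> x) (\<pi> z) (\<pi> y)"
    using utree_leaf_dist_eq_gromov[OF sym xyz perm image] .
  moreover have "utree_leaf_dist d x y z (\<pi> z) = gromov d (\<pi> x) (\<pi> y) (\<pi> z)"
  proof (rule utree_leaf_dist_eq_gromov[OF sym xyz])
    show "distinct [\<pi> x, \<pi> z, \<pi> y]" using perm by auto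
    show "{\<pi> x, \<pi> z, \<pi> y} = {x, y, z}" using image by (simp add: insert_commute)
  qed
  ultimately show ?thesis
    using hyperbolic_tripod_distortion_le[OF assms(1,2) in_S(1,2,3) assms(3)]
      hyperbolic_tripod_distortion_le[OF assms(1,2) in_S(1,3,2) assms(3)] commute by simp
qed

end
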